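(* Let $T=(F_0,F_1)$ be a template of order $10$ and type $(4,4,4,4)$, and let $N$ be a $4$-net of order $10$ that is a refinement of $T$. Then: (i) the four points of $T$ of weight $4$ (type $1111$) lie in pairwise distinct rows and pairwise distinct columns; (ii) each row of $Q_2$ and each column of $Q_3$ contains exactly three cells of type ${*}{*}10$ and three cells of type ${*}{*}01$; (iii) each relational line of $N$ in $\Pi_2\cup\Pi_3$ contains exactly one point of $Q_1$ and exactly three points in each of $Q_2$, $Q_3$ and $Q_4$; (iv) each column of $Q_2$ and each row of $Q_3$ contains exactly two cells of type ${*}{*}01$ and two of type ${*}{*}10$; and each row and each column of $Q_4$ contains exactly two cells of type $0011$ and four cells of type $0000$. Here ${*}$ denotes an arbitrary bit.
   Context: A $k$-net of order $n$: a set of $n^2$ points and $kn$ lines (subsets of size $n$), each point on $k$ lines, lines partitioned into $k$ parallel classes $\Pi_0,\dots,\Pi_{k-1}$ of $n$ pairwise disjoint lines, lines from different classes meeting in exactly one point. A binary frequency square of order $n$ with frequencies $(n-\lambda,\lambda)$ is an $n\times n$ array over $\{0,1\}$ with exactly $\lambda$ ones in each row and each column; two such squares with frequencies $(n-\lambda,\lambda)$, $(n-\mu,\mu)$ are orthogonal if each pair $(a,b)\in\{0,1\}^2$ occurs in exactly $f_a f'_b$ cells, where $f_0=n-\lambda,f_1=\lambda,f'_0=n-\mu,f'_1=\mu$. For $n$ even and even $\lambda_0,\dots,\lambda_{k-1}$, a template of order $n$ and type $(\lambda_0,\dots,\lambda_{k-1})$ is a list $(F_0,\dots,F_{k-3})$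 of mutually orthogonal binary frequency squares of order $n$, $F_{t-2}$ having frequencies $(n-\lambda_t,\lambda_t)$, where rows $0,\dots,\lambda_0-1$ and columns $0,\dots,\lambda_1-1$ are called relational; the type of cell $(i,j)$ is the string $(x,y,F_0[i,j],\dots,F_{k-3}[i,j])$ with $x=1$ iff row $i$ is relational and $y=1$ iff column $j$ is relational; its weight is the number of ones in its type, and it is required that every cell has weight $\equiv\frac12\sum_i\lambda_i\pmod 2$. A $k$-net $N$ with parallel classes $\Pi_0,\dots,\Pi_{k-1}$ is a refinement of $T$ if the lines of $\Pi_0$ and $\Pi_1$ can be labelled $0,\dots,n-1$ (rows and columns) so that, identifying each point with the cell (row label, column label), for each $t\ge2$ every line of $\Pi_t$ consists of cells on which $F_{t-2}$ is constant; a line of $\Pi_t$ ($t\ge 2$) is relational if $F_{t-2}$ equals $1$ on it, and relational rows/columns are the lines of $\Pi_0,\Pi_1$ labelled by relational rows/columns. For order $10$ and type $(4,4,4,4)$ the quadrants are: $Q_1$ = rows $0$–$3$ × columns $0$–$3$; $Q_2$ = rows $0$–$3$ × columns $4$–$9$; $Q_3$ = rows $4$–$9$ × columns $0$–$3$; $Q_4$ = rows $4$–$9$ × columns $4$–$9$. A "row of $Q_2$" means the 6 cells of one relational row in $Q_2$, a "column of $Q_2$" the 4 cells of one non-relational column in $Q_2$, and similarly for the other quadrants. *)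

theory Defs
  imports Main
begin

definition is_net :: "nat \<Rightarrow> nat \<Rightarrow> 'p set \<Rightarrow> (nat \<Rightarrow> 'p set set) \<Rightarrow> bool" where
  "is_net k n P Pi \<longleftrightarrow>
     finite P \<and> card P = n^2 \<and>
     (\<forall>t<k. card (Pi t) = n \<and> (\<forall>L\<in>Pi t. L \<subseteq> P \<and> card L = n) \<and>
            (\<forall>L\<in>Pi t. \<forall>M\<in>Pi t. L \<noteq> M \<longrightarrow> L \<inter> M = {})) \<and>
     (\<forall>t<k. \<forall>u<k. t \<noteq> u \<longrightarrow> Pi t \<inter> Pi u = {}) \<and>
     (\<forall>t<k. \<forall>u<k. t \<noteq> u \<longrightarrow> (\<forall>L\<in>Pi t. \<forall>M\<in>Pi u. card (L \<inter> M) = 1)) \<and>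
     (\<forall>p\<in>P. \<forall>t<k. \<exists>!L. L \<in> Pi t \<and> p \<in> L)"

definition freq_square :: "nat \<Rightarrow> nat \<Rightarrow> (nat \<Rightarrow> nat \<Rightarrow> nat) \<Rightarrow> bool" where
  "freq_square n lam F \<longleftrightarrow>
     (\<forall>i<n. \<forall>j<n. F i j \<in> {0, 1}) \<and>
     (\<forall>i<n. card {j. j < n \<and> F i j = 1} = lam) \<and>
     (\<forall>j<n. card {i. i < n \<and> F i j = 1} = lam)"

definition freq :: "nat \<Rightarrow> nat \<Rightarrow> nat \<Rightarrow> nat" where
  "freq n lam a = (if a = 1 then lam else n - lam)"

definition orthogonal_fs :: "nat \<Rightarrow> nat \<Rightarrow> nat \<Rightarrow> (nat \<Rightarrow> nat \<Rightarrow> nat) \<Rightarrow> (nat \<Rightarrow> nat \<Rightarrow> nat) \<Rightarrow> bool" where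
  "orthogonal_fs n lam mu F G \<longleftrightarrow>
     (\<forall>a\<in>{0,1}. \<forall>b\<in>{0,1}.
        card {(i, j). i < n \<and> j < n \<and> F i j = a \<and> G i j = b} = freq n lam a * freq n mu b)"

(* type of cell (i,j): (x, y, F_0[i,j], ..., F_{k-3}[i,j]) *)
definition cell_type :: "nat list \<Rightarrow> (nat \<Rightarrow> nat \<Rightarrow> nat) list \<Rightarrow> nat \<Rightarrow> nat \<Rightarrow> nat list" where
  "cell_type lams Fs i j =
     [if i < lams ! 0 then 1 else 0, if j < lams ! 1 then 1 else 0] @ map (\<lambda>F. F i j) Fs"

definition cell_weight :: "nat list \<Rightarrow> (nat \<Rightarrow> nat \<Rightarrow> nat) list \<Rightarrow> nat \<Rightarrow> nat \<Rightarrow> nat" where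
  "cell_weight lams Fs i j = sum_list (cell_type lams Fs i j)"

definition template :: "nat \<Rightarrow> nat list \<Rightarrow> (nat \<Rightarrow> nat \<Rightarrow> nat) list \<Rightarrow> bool" where
  "template n lams Fs \<longleftrightarrow>
     even n \<and> 2 \<le> length lams \<and> (\<forall>l\<in>set lams. even l) \<and>
     length Fs + 2 = length lams \<and>
     (\<forall>t<length Fs. freq_square n (lams ! (t + 2)) (Fs ! t)) \<and>
     (\<forall>s<length Fs. \<forall>t<length Fs. s \<noteq> t \<longrightarrow>
        orthogonal_fs n (lams ! (s + 2)) (lams ! (t + 2)) (Fs ! s) (Fs ! t)) \<and>
     (\<forall>i<n. \<forall>j<n. cell_weight lams Fs i j mod 2 = (sum_list lams div 2) mod 2)"

definition cell_of :: "(nat \<Rightarrow> 'p set set) \<Rightarrow> ('p set \<Rightarrow> nat) \<Rightarrow> ('p set \<Rightarrow> nat) \<Rightarrow> 'p \<Rightarrow> nat \<times> nat" where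
  "cell_of Pi row col p = (row (THE L. L \<in> Pi 0 \<and> p \<in> L), col (THE L. L \<in> Pi 1 \<and> p \<in> L))"

definition refinement_via :: "nat \<Rightarrow> nat list \<Rightarrow> (nat \<Rightarrow> nat \<Rightarrow> nat) list \<Rightarrow> 'p set \<Rightarrow> (nat \<Rightarrow> 'p set set)
      \<Rightarrow> ('p set \<Rightarrow> nat) \<Rightarrow> ('p set \<Rightarrow> nat) \<Rightarrow> bool" where
  "refinement_via n lams Fs P Pi row col \<longleftrightarrow>
     bij_betw row (Pi 0) {..<n} \<and> bij_betw col (Pi 1) {..<n} \<and>
     (\<forall>t. 2 \<le> t \<and> t < length lams \<longrightarrow>
        (\<forall>L\<in>Pi t. \<forall>p\<in>L. \<forall>q\<in>L.
           case_prod (Fs ! (t - 2)) (cell_of Pi row col p) = case_prod (Fs ! (t - 2)) (cell_of Pi row col q)))"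

end

theory Submission
  imports Defs
begin

text \<open>Half of $4+4+4+4$ is even, so every cell of the template has even weight: $F_0$ and $F_1$
  agree exactly on $Q_1 \cup Q_4$. If two $0/1$ vectors with equally many ones agree off a set $B$
  and disagree on $B$, each of them has exactly $|B|/2$ ones on $B$. Applied to the rows and
  columns of $F_0$ and $F_1$, which all carry four ones, this gives (i), (ii) and (iv).

  A line $L$ of $\Pi_2$ meets every row and every column exactly once, and the lines of $\Pi_3$
  on which $F_1 = 1$ meet $L$ in as many points as they meet a row, namely $4$. If $F_0 = 1$ on
  $L$, these points are exactly those of $L$ in $Q_1 \cup Q_4$; together with the $4$ points of $L$
  in relational rows and the $4$ in relational columns this determines the four quadrant counts (iii).\<close>

lemma card_bij_betw_filter:
  assumes "bij_betw h A B"
  shows "card {x\<in>A. Q (h x)} = card {y\<in>B. Q y}"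
proof (rule bij_betw_same_card, rule bij_betw_subset[OF assms])
  show "h ` {x\<in>A. Q (h x)} = {y\<in>B. Q y}"
    using bij_betw_imp_surj_on[OF assms] by blast
qed auto

lemma card_agree_disagree:
  fixes f g :: "'a \<Rightarrow> nat"
  assumes S: "finite S" and B: "B \<subseteq> S"
    and bits: "\<forall>x\<in>S. f x \<in> {0, 1} \<and> g x \<in> {0, 1}"
    and agree: "\<forall>x\<in>S - B. f x = g x" and disagree: "\<forall>x\<in>B. f x \<noteq> g x"
    and same_ones: "card {x\<in>S. f x = 1} = card {x\<in>S. g x = 1}"
  shows "2 * card {x\<in>B. f x = 1 \<and> g x = 0} = card B"
    and "2 * card {x\<in>B. f x = 0 \<and> g x = 1} = card B"
    and "card {x\<in>S - B. f x = 1 \<and> g x = 1} + card {x\<in>B. f x = 1 \<and> g x = 0} = card {x\<in>S. f x = 1}"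
    and "card {x\<in>S - B. f x = 0 \<and> g x = 0} + card {x\<in>S - B. f x = 1 \<and> g x = 1} = card (S - B)"
proof -
  define X where "X = {x\<in>B. f x = 1 \<and> g x = 0}"
  define Y where "Y = {x\<in>B. f x = 0 \<and> g x = 1}"
  define A1 where "A1 = {x\<in>S - B. f x = 1 \<and> g x = 1}"
  define A0 where "A0 = {x\<in>S - B. f x = 0 \<and> g x = 0}"
  have fin: "finite X" "finite Y" "finite A1" "finite A0"
    using S finite_subset[OF B S] unfolding X_def Y_def A1_def A0_def by auto
  have "{x\<in>S. f x = 1} = A1 \<union> X" "{x\<in>S. g x = 1} = A1 \<union> Y" "B = X \<union> Y" "S - B = A0 \<union> A1"
    using B bits agree disagree unfolding X_def Y_def A1_def A0_def by (auto; fastforce)+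
  moreover have "A1 \<inter> X = {}" "A1 \<inter> Y = {}" "X \<inter> Y = {}" "A0 \<inter> A1 = {}"
    unfolding X_def Y_def A1_def A0_def by auto
  ultimately have "card {x\<in>S. f x = 1} = card A1 + card X" "card {x\<in>S. g x = 1} = card A1 + card Y"
      "card B = card X + card Y" "card (S - B) = card A0 + card A1"
    using fin by (simp_all add: card_Un_disjoint)
  then show "2 * card X = card B" "2 * card Y = card B" "card A1 + card X = card {x\<in>S. f x = 1}"
      "card A0 + card A1 = card (S - B)"
    using same_ones by simp_all
qed

lemma transversal_quadrants:
  fixes r c :: "'a \<Rightarrow> nat"
  assumes r: "bij_betw r L {..<n}" and c: "bij_betw c L {..<n}" and m: "m \<le> n"
  shows "card {p\<in>L. r p < m \<and> c p < m} + card {p\<in>L. r p < m \<and> m \<le> c p} = m"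
    and "card {p\<in>L. r p < m \<and> c p < m} + card {p\<in>L. m \<le> r p \<and> c p < m} = m"
    and "card {p\<in>L. m \<le> r p \<and> c p < m} + card {p\<in>L. m \<le> r p \<and> m \<le> c p} = n - m"
proof -
  have fin: "finite L" using bij_betw_finite r by blast
  have split: "card {p\<in>L. A p} = card {p\<in>L. A p \<and> B p} + card {p\<in>L. A p \<and> \<not> B p}" for A B
    using fin by (subst card_Un_disjoint[symmetric]) (auto intro: arg_cong[where f = card])
  have "{i. i < n \<and> i < m} = {..<m}" "{i. i < n \<and> m \<le> i} = {m..<n}"
    using m by auto
  then have "card {p\<in>L. r p < m} = m" "card {p\<in>L. c p < m} = m" "card {p\<in>L. m \<le> r p} = n - m"
    using card_bij_betw_filter[OF r, of "\<lambda>i. i < m"] card_bij_betw_filter[OF c, of "\<lambda>i. i < m"]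
      card_bij_betw_filter[OF r, of "\<lambda>i. m \<le> i"] m
    by simp_all
  then show "card {p\<in>L. r p < m \<and> c p < m} + card {p\<in>L. r p < m \<and> m \<le> c p} = m"
    and "card {p\<in>L. r p < m \<and> c p < m} + card {p\<in>L. m \<le> r p \<and> c p < m} = m"
    and "card {p\<in>L. m \<le> r p \<and> c p < m} + card {p\<in>L. m \<le> r p \<and> m \<le> c p} = n - m"
    using split[of "\<lambda>p. r p < m" "\<lambda>p. c p < m"] split[of "\<lambda>p. c p < m" "\<lambda>p. r p < m"]
      split[of "\<lambda>p. m \<le> r p" "\<lambda>p. c p < m"]
    by (simp_all add: not_less conj_commute)
qed

definition line_through :: "(nat \<Rightarrow> 'p set set) \<Rightarrow> nat \<Rightarrow> 'p \<Rightarrow> 'p set" where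
  "line_through Pi t p = (THE L. L \<in> Pi t \<and> p \<in> L)"

lemma cell_of_line_through:
  "cell_of Pi row col p = (row (line_through Pi 0 p), col (line_through Pi 1 p))"
  unfolding cell_of_def line_through_def ..

context
  fixes k n :: nat and P :: "'p set" and Pi :: "nat \<Rightarrow> 'p set set"
  assumes net: "is_net k n P Pi"
begin

lemma net_line_subset: "t < k \<Longrightarrow> L \<in> Pi t \<Longrightarrow> L \<subseteq> P"
  using net unfolding is_net_def by auto

lemma net_finite_line: "t < k \<Longrightarrow> L \<in> Pi t \<Longrightarrow> finite L"
  using net net_line_subset finite_subset unfolding is_net_def by metis

lemma net_card_class: "t < k \<Longrightarrow> card (Pi t) = n"
  using net unfolding is_net_def by auto

lemma net_card_Int_lines:
  "t < k \<Longrightarrow> u < k \<Longrightarrow> t \<noteq> u \<Longrightarrow> L \<in> Pi t \<Longrightarrow> M \<in> Pi u \<Longrightarrow> card (L \<inter> M) = 1"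
  using net unfolding is_net_def by auto

lemma line_through:
  assumes "t < k" "p \<in> P"
  shows "line_through Pi t p \<in> Pi t" and "p \<in> line_through Pi t p"
proof -
  have "\<exists>!L. L \<in> Pi t \<and> p \<in> L"
    using net assms unfolding is_net_def by auto
  from theI'[OF this] show "line_through Pi t p \<in> Pi t" "p \<in> line_through Pi t p"
    unfolding line_through_def by blast+
qed

lemma line_through_eq:
  assumes "t < k" "L \<in> Pi t" "p \<in> L"
  shows "line_through Pi t p = L"
proof -
  have "p \<in> P"
    using net_line_subset assms by auto
  then have "\<exists>!L. L \<in> Pi t \<and> p \<in> L"
    using net assms(1) unfolding is_net_def by auto
  then show ?thesis
    unfolding line_through_def using assms(2,3) by (simp add: the1_equality)
qed

lemma bij_betw_line_through:
  assumes a: "a < k" and t: "t < k" "a \<noteq> t" and L: "L \<in> Pi t"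
  shows "bij_betw (line_through Pi a) L (Pi a)"
proof (rule bij_betw_imageI)
  have on_line: "line_through Pi a p \<in> Pi a" "p \<in> line_through Pi a p" if "p \<in> L" for p
    using line_through[OF a] net_line_subset[OF t(1) L] that by auto
  show "inj_on (line_through Pi a) L"
  proof (rule inj_onI)
    fix p q assume "p \<in> L" "q \<in> L" "line_through Pi a p = line_through Pi a q"
    then have "{p, q} \<subseteq> L \<inter> line_through Pi a p"
      using on_line by auto
    moreover have "card (L \<inter> line_through Pi a p) = 1"
      using net_card_Int_lines[OF t(1) a] t(2) L on_line \<open>p \<in> L\<close> by auto
    ultimately show "p = q"
      by (metis card_1_singletonE insert_subset singletonD)
  qed
  show "line_through Pi a ` L = Pi a"
  proof
    show "line_through Pi a ` L \<subseteq> Pi a" using on_line by auto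
    show "Pi a \<subseteq> line_through Pi a ` L"
    proof
      fix M assume M: "M \<in> Pi a"
      then obtain x where "L \<inter> M = {x}"
        using net_card_Int_lines[OF t(1) a] t(2) L by (metis card_1_singletonE)
      then show "M \<in> line_through Pi a ` L"
        using line_through_eq[OF a M] by blast
    qed
  qed
qed

lemma card_points_eq_card_lines:
  assumes a: "a < k" and u: "u < k" "a \<noteq> u" and A: "A \<in> Pi a"
    and const: "\<forall>M\<in>Pi u. \<forall>p\<in>M. \<forall>q\<in>M. \<Phi> p = \<Phi> q"
  shows "card {p\<in>A. \<Phi> p} = card {M\<in>Pi u. \<exists>q\<in>M. \<Phi> q}"
proof -
  have "\<Phi> p = (\<exists>q\<in>line_through Pi u p. \<Phi> q)" if "p \<in> A" for p
    using line_through[OF u(1)] net_line_subset[OF a A] const that by blast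
  then have "{p\<in>A. \<Phi> p} = {p\<in>A. \<exists>q\<in>line_through Pi u p. \<Phi> q}" by blast
  also have "card \<dots> = card {M\<in>Pi u. \<exists>q\<in>M. \<Phi> q}"
    by (rule card_bij_betw_filter[OF bij_betw_line_through[OF u(1) a u(2)[symmetric] A]])
  finally show ?thesis .
qed

lemma card_line_square_ones:
  assumes n: "0 < n" and square: "freq_square n lam G"
    and row: "bij_betw row (Pi 0) {..<n}" and col: "bij_betw col (Pi 1) {..<n}"
    and t: "t < k" and u: "0 < u" "u < k" "t \<noteq> u" and L: "L \<in> Pi t"
    and const: "\<forall>M\<in>Pi u. \<forall>p\<in>M. \<forall>q\<in>M.
      case_prod G (cell_of Pi row col p) = case_prod G (cell_of Pi row col q)"
  shows "card {p\<in>L. case_prod G (cell_of Pi row col p) = 1} = lam"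
proof -
  define \<Phi> where "\<Phi> p \<longleftrightarrow> case_prod G (cell_of Pi row col p) = 1" for p
  have const\<Phi>: "\<forall>M\<in>Pi u. \<forall>p\<in>M. \<forall>q\<in>M. \<Phi> p = \<Phi> q"
    using const unfolding \<Phi>_def by metis
  have "card (Pi 0) = n" using net_card_class u by simp
  then obtain R where R: "R \<in> Pi 0" using n by fastforce
  have "card {p\<in>L. \<Phi> p} = card {M\<in>Pi u. \<exists>q\<in>M. \<Phi> q}"
    using card_points_eq_card_lines[OF t u(2,3) L const\<Phi>] .
  also have "\<dots> = card {p\<in>R. \<Phi> p}"
    using card_points_eq_card_lines[OF _ u(2) _ R const\<Phi>] u t by simp
  also have "{p\<in>R. \<Phi> p} = {p\<in>R. G (row R) ((col \<circ> line_through Pi 1) p) = 1}"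
    using line_through_eq[OF _ R] u unfolding \<Phi>_def cell_of_line_through by auto
  also have "card \<dots> = card {j\<in>{..<n}. G (row R) j = 1}"
    using u by (intro card_bij_betw_filter bij_betw_trans[OF bij_betw_line_through[of 1 0 R] col] R) auto
  also have "\<dots> = lam"
    using square bij_betw_apply[OF row R] unfolding freq_square_def by simp
  finally show ?thesis unfolding \<Phi>_def .
qed

end

lemma refinement_via_constant_on_lines:
  assumes "refinement_via n lams Fs P Pi row col" and "2 \<le> t" "t < length lams"
  shows "\<forall>M\<in>Pi t. \<forall>p\<in>M. \<forall>q\<in>M.
    case_prod (Fs ! (t - 2)) (cell_of Pi row col p) = case_prod (Fs ! (t - 2)) (cell_of Pi row col q)"
  using assms unfolding refinement_via_def by blast


lemma freq_square_transpose:
  "freq_square n lam F \<Longrightarrow> freq_square n lam (\<lambda>i j. F j i)"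
  unfolding freq_square_def by auto

lemma template_4444_squares:
  assumes "template 10 [4,4,4,4] [F0, F1]"
  shows "freq_square 10 4 F0" and "freq_square 10 4 F1"
  using assms unfolding template_def by (auto dest: spec[of _ 0] spec[of _ 1])

lemma template_4444_agree_iff:
  assumes T: "template 10 [4,4,4,4] [F0, F1]" and "i < 10" "j < 10"
  shows "(F0 i j = F1 i j) = ((i < 4) = (j < 4))"
proof -
  have "F0 i j \<in> {0, 1}" "F1 i j \<in> {0, 1}"
    using template_4444_squares[OF T] assms(2,3) unfolding freq_square_def by auto
  moreover have "cell_weight [4,4,4,4] [F0, F1] i j mod 2 = 0"
    using T assms(2,3) unfolding template_def by auto
  ultimately show ?thesis
    by (auto simp: cell_weight_def cell_type_def split: if_splits)
qed

locale template_4444_pair =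
  fixes F G :: "nat \<Rightarrow> nat \<Rightarrow> nat"
  assumes square_F: "freq_square 10 4 F" and square_G: "freq_square 10 4 G"
    and agree_iff: "\<And>i j. i < 10 \<Longrightarrow> j < 10 \<Longrightarrow> (F i j = G i j) = ((i < 4) = (j < 4))"
begin

lemma transpose: "template_4444_pair (\<lambda>i j. F j i) (\<lambda>i j. G j i)"
  using square_F square_G agree_iff
  by unfold_locales (auto intro: freq_square_transpose)

lemma swap: "template_4444_pair G F"
  using square_F square_G by unfold_locales (simp_all add: agree_iff[symmetric] eq_commute)

lemma row_agree_disagree:
  assumes i: "i < 10" and B: "B \<subseteq> {..<10}"
    and agree: "\<forall>j\<in>{..<10} - B. F i j = G i j" and disagree: "\<forall>j\<in>B. F i j \<noteq> G i j"
  shows "2 * card {j\<in>B. F i j = 1 \<and> G i j = 0} = card B"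
    and "2 * card {j\<in>B. F i j = 0 \<and> G i j = 1} = card B"
    and "card {j\<in>{..<10} - B. F i j = 1 \<and> G i j = 1} + card {j\<in>B. F i j = 1 \<and> G i j = 0} = 4"
    and "card {j\<in>{..<10} - B. F i j = 0 \<and> G i j = 0} + card {j\<in>{..<10} - B. F i j = 1 \<and> G i j = 1}
           = card ({..<10} - B)"
proof -
  have ones: "card {j\<in>{..<10}. F i j = 1} = 4" "card {j\<in>{..<10}. G i j = 1} = 4"
    using square_F square_G i unfolding freq_square_def by simp_all
  have bits: "\<forall>j\<in>{..<10}. F i j \<in> {0, 1} \<and> G i j \<in> {0, 1}"
    using square_F square_G i unfolding freq_square_def by simp
  show "2 * card {j\<in>B. F i j = 1 \<and> G i j = 0} = card B"
    and "2 * card {j\<in>B. F i j = 0 \<and> G i j = 1} = card B"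
    and "card {j\<in>{..<10} - B. F i j = 1 \<and> G i j = 1} + card {j\<in>B. F i j = 1 \<and> G i j = 0} = 4"
    and "card {j\<in>{..<10} - B. F i j = 0 \<and> G i j = 0} + card {j\<in>{..<10} - B. F i j = 1 \<and> G i j = 1}
           = card ({..<10} - B)"
    using card_agree_disagree[OF finite_lessThan B bits agree disagree] ones by simp_all
qed

lemma relational_row_counts:
  assumes "i < 4"
  shows "card {j. 4 \<le> j \<and> j < 10 \<and> F i j = 1 \<and> G i j = 0} = 3"
    and "card {j. 4 \<le> j \<and> j < 10 \<and> F i j = 0 \<and> G i j = 1} = 3"
    and "card {j. j < 4 \<and> F i j = 1 \<and> G i j = 1} = 1"
proof -
  have B: "{4..<10} \<subseteq> {..<10::nat}" and rest: "{..<10} - {4..<10} = {..<4::nat}" by auto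
  have "\<forall>j\<in>{..<10} - {4..<10}. F i j = G i j" "\<forall>j\<in>{4..<10}. F i j \<noteq> G i j"
    using agree_iff assms by auto
  note counts = row_agree_disagree[OF _ B this, unfolded rest]
  show "card {j. 4 \<le> j \<and> j < 10 \<and> F i j = 1 \<and> G i j = 0} = 3"
    and "card {j. 4 \<le> j \<and> j < 10 \<and> F i j = 0 \<and> G i j = 1} = 3"
    and "card {j. j < 4 \<and> F i j = 1 \<and> G i j = 1} = 1"
    using counts(1-3) assms by (simp_all add: conj_assoc)
qed

lemma nonrelational_row_counts:
  assumes "4 \<le> i" "i < 10"
  shows "card {j. j < 4 \<and> F i j = 0 \<and> G i j = 1} = 2"
    and "card {j. j < 4 \<and> F i j = 1 \<and> G i j = 0} = 2"
    and "card {j. 4 \<le> j \<and> j < 10 \<and> F i j = 1 \<and> G i j = 1} = 2"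
    and "card {j. 4 \<le> j \<and> j < 10 \<and> F i j = 0 \<and> G i j = 0} = 4"
proof -
  have B: "{..<4} \<subseteq> {..<10::nat}" and rest: "{..<10} - {..<4} = {4..<10::nat}" by auto
  have "\<forall>j\<in>{..<10} - {..<4}. F i j = G i j" "\<forall>j\<in>{..<4}. F i j \<noteq> G i j"
    using agree_iff assms by auto
  note counts = row_agree_disagree[OF _ B this, unfolded rest]
  show "card {j. j < 4 \<and> F i j = 0 \<and> G i j = 1} = 2"
    and "card {j. j < 4 \<and> F i j = 1 \<and> G i j = 0} = 2"
    and "card {j. 4 \<le> j \<and> j < 10 \<and> F i j = 1 \<and> G i j = 1} = 2"
    and "card {j. 4 \<le> j \<and> j < 10 \<and> F i j = 0 \<and> G i j = 0} = 4"
    using counts assms by (simp_all add: conj_assoc)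
qed

lemma relational_column_counts:
  assumes "j < 4"
  shows "card {i. 4 \<le> i \<and> i < 10 \<and> F i j = 1 \<and> G i j = 0} = 3"
    and "card {i. 4 \<le> i \<and> i < 10 \<and> F i j = 0 \<and> G i j = 1} = 3"
    and "card {i. i < 4 \<and> F i j = 1 \<and> G i j = 1} = 1"
  using template_4444_pair.relational_row_counts[OF transpose assms] by simp_all

lemma nonrelational_column_counts:
  assumes "4 \<le> j" "j < 10"
  shows "card {i. i < 4 \<and> F i j = 0 \<and> G i j = 1} = 2"
    and "card {i. i < 4 \<and> F i j = 1 \<and> G i j = 0} = 2"
    and "card {i. 4 \<le> i \<and> i < 10 \<and> F i j = 1 \<and> G i j = 1} = 2"
    and "card {i. 4 \<le> i \<and> i < 10 \<and> F i j = 0 \<and> G i j = 0} = 4"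
  using template_4444_pair.nonrelational_row_counts[OF transpose assms] by simp_all

lemma Q2_Q3_relational_counts:
  "(\<forall>i<4. card {j. 4 \<le> j \<and> j < 10 \<and> F i j = 1 \<and> G i j = 0} = 3 \<and>
          card {j. 4 \<le> j \<and> j < 10 \<and> F i j = 0 \<and> G i j = 1} = 3) \<and>
   (\<forall>j<4. card {i. 4 \<le> i \<and> i < 10 \<and> F i j = 1 \<and> G i j = 0} = 3 \<and>
          card {i. 4 \<le> i \<and> i < 10 \<and> F i j = 0 \<and> G i j = 1} = 3)"
  using relational_row_counts relational_column_counts by simp

lemma Q2_Q3_Q4_nonrelational_counts:
  "(\<forall>j. 4 \<le> j \<and> j < 10 \<longrightarrow>
      card {i. i < 4 \<and> F i j = 0 \<and> G i j = 1} = 2 \<and>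
      card {i. i < 4 \<and> F i j = 1 \<and> G i j = 0} = 2) \<and>
   (\<forall>i. 4 \<le> i \<and> i < 10 \<longrightarrow>
      card {j. j < 4 \<and> F i j = 0 \<and> G i j = 1} = 2 \<and>
      card {j. j < 4 \<and> F i j = 1 \<and> G i j = 0} = 2) \<and>
   (\<forall>i. 4 \<le> i \<and> i < 10 \<longrightarrow>
      card {j. 4 \<le> j \<and> j < 10 \<and> F i j = 1 \<and> G i j = 1} = 2 \<and>
      card {j. 4 \<le> j \<and> j < 10 \<and> F i j = 0 \<and> G i j = 0} = 4) \<and>
   (\<forall>j. 4 \<le> j \<and> j < 10 \<longrightarrow>
      card {i. 4 \<le> i \<and> i < 10 \<and> F i j = 1 \<and> G i j = 1} = 2 \<and>
      card {i. 4 \<le> i \<and> i < 10 \<and> F i j = 0 \<and> G i j = 0} = 4)"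
  using nonrelational_row_counts nonrelational_column_counts by simp

lemma Q1_weight4_cells:
  "card {(i, j). i < 4 \<and> j < 4 \<and> F i j = 1 \<and> G i j = 1} = 4 \<and>
   (\<forall>i j i' j'. i < 4 \<and> j < 4 \<and> F i j = 1 \<and> G i j = 1 \<and>
      i' < 4 \<and> j' < 4 \<and> F i' j' = 1 \<and> G i' j' = 1 \<and> (i, j) \<noteq> (i', j')
      \<longrightarrow> i \<noteq> i' \<and> j \<noteq> j')"
proof (intro conjI allI impI)
  have "{(i, j). i < 4 \<and> j < 4 \<and> F i j = 1 \<and> G i j = 1} =
        (SIGMA i:{..<4}. {j. j < 4 \<and> F i j = 1 \<and> G i j = 1})" by auto
  then show "card {(i, j). i < 4 \<and> j < 4 \<and> F i j = 1 \<and> G i j = 1} = 4"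
    using relational_row_counts(3) by simp
next
  fix i j i' j'
  assume cells: "i < 4 \<and> j < 4 \<and> F i j = 1 \<and> G i j = 1 \<and>
    i' < 4 \<and> j' < 4 \<and> F i' j' = 1 \<and> G i' j' = 1 \<and> (i, j) \<noteq> (i', j')"
  have unique: "x = y" if "card X = 1" "x \<in> X" "y \<in> X" for X :: "nat set" and x y
    using that by (auto simp: card_1_singleton_iff)
  show "i \<noteq> i'"
    using cells unique[OF relational_row_counts(3)[of i], of j j'] by auto
  show "j \<noteq> j'"
    using cells unique[OF relational_column_counts(3)[of j], of i i'] by auto
qed

end

lemma (in template_4444_pair) relational_line_quadrants:
  assumes net: "is_net 4 10 P Pi"
    and row: "bij_betw row (Pi 0) {..<10}" and col: "bij_betw col (Pi 1) {..<10}"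
    and t: "t \<in> {2, 3}" and u: "u \<in> {2, 3}" "t \<noteq> u" and L: "L \<in> Pi t"
    and F_on_L: "\<forall>p\<in>L. case_prod F (cell_of Pi row col p) = 1"
    and G_const: "\<forall>M\<in>Pi u. \<forall>p\<in>M. \<forall>q\<in>M.
      case_prod G (cell_of Pi row col p) = case_prod G (cell_of Pi row col q)"
  shows "card {p\<in>L. fst (cell_of Pi row col p) < 4 \<and> snd (cell_of Pi row col p) < 4} = 1 \<and>
    card {p\<in>L. fst (cell_of Pi row col p) < 4 \<and> 4 \<le> snd (cell_of Pi row col p)} = 3 \<and>
    card {p\<in>L. 4 \<le> fst (cell_of Pi row col p) \<and> snd (cell_of Pi row col p) < 4} = 3 \<and>
    card {p\<in>L. 4 \<le> fst (cell_of Pi row col p) \<and> 4 \<le> snd (cell_of Pi row col p)} = 3"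
proof -
  define r where "r p = fst (cell_of Pi row col p)" for p
  define c where "c p = snd (cell_of Pi row col p)" for p
  have "r = row \<circ> line_through Pi 0" "c = col \<circ> line_through Pi 1"
    unfolding r_def c_def cell_of_line_through by auto
  moreover have "t < 4" "t \<noteq> 0" "t \<noteq> 1" using t by auto
  ultimately have r: "bij_betw r L {..<10}" and c: "bij_betw c L {..<10}"
    using bij_betw_trans[OF bij_betw_line_through[OF net _ _ _ L] row]
      bij_betw_trans[OF bij_betw_line_through[OF net _ _ _ L] col] by auto
  have G_ones: "card {p\<in>L. case_prod G (cell_of Pi row col p) = 1} = 4"
    using t u L by (intro card_line_square_ones[OF net _ square_G row col _ _ _ _ _ G_const]) auto
  have "case_prod G (cell_of Pi row col p) = 1 \<longleftrightarrow> (r p < 4) = (c p < 4)" if "p \<in> L" for p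
    using F_on_L agree_iff bij_betw_apply[OF r that] bij_betw_apply[OF c that] that
    unfolding r_def c_def by (cases "cell_of Pi row col p") fastforce
  then have "{p\<in>L. case_prod G (cell_of Pi row col p) = 1} =
      {p\<in>L. r p < 4 \<and> c p < 4} \<union> {p\<in>L. 4 \<le> r p \<and> 4 \<le> c p}"
    by auto
  moreover have "finite L" using net_finite_line[OF net _ L] t by auto
  ultimately have "card {p\<in>L. r p < 4 \<and> c p < 4} + card {p\<in>L. 4 \<le> r p \<and> 4 \<le> c p} = 4"
    using G_ones by (simp add: card_Un_disjoint disjoint_iff)
  then show ?thesis
    using transversal_quadrants[OF r c, of 4] unfolding r_def c_def by simp
qed

lemma (in template_4444_pair) refinement_relational_line_quadrants:
  assumes N: "is_net 4 10 P Pi" and R: "refinement_via 10 [4,4,4,4] [F, G] P Pi row col"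
  shows "\<forall>t\<in>{2, 3}. \<forall>L\<in>Pi t. (\<forall>p\<in>L. case_prod ([F, G] ! (t - 2)) (cell_of Pi row col p) = 1) \<longrightarrow>
    card {p\<in>L. fst (cell_of Pi row col p) < 4 \<and> snd (cell_of Pi row col p) < 4} = 1 \<and>
    card {p\<in>L. fst (cell_of Pi row col p) < 4 \<and> 4 \<le> snd (cell_of Pi row col p)} = 3 \<and>
    card {p\<in>L. 4 \<le> fst (cell_of Pi row col p) \<and> snd (cell_of Pi row col p) < 4} = 3 \<and>
    card {p\<in>L. 4 \<le> fst (cell_of Pi row col p) \<and> 4 \<le> snd (cell_of Pi row col p)} = 3"
    (is "\<forall>t\<in>{2, 3}. \<forall>L\<in>Pi t. _ \<longrightarrow> ?quadrants L")
proof (intro ballI impI)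
  have row: "bij_betw row (Pi 0) {..<10}" and col: "bij_betw col (Pi 1) {..<10}"
    using R unfolding refinement_via_def by simp_all
  have F_const: "\<forall>M\<in>Pi 2. \<forall>p\<in>M. \<forall>q\<in>M.
      case_prod F (cell_of Pi row col p) = case_prod F (cell_of Pi row col q)"
    using refinement_via_constant_on_lines[OF R, of 2, simplified] .
  have G_const: "\<forall>M\<in>Pi 3. \<forall>p\<in>M. \<forall>q\<in>M.
      case_prod G (cell_of Pi row col p) = case_prod G (cell_of Pi row col q)"
    using refinement_via_constant_on_lines[OF R, of 3, simplified] .
  fix t L assume t: "t \<in> {2, 3}" and L: "L \<in> Pi t"
    and on_L: "\<forall>p\<in>L. case_prod ([F, G] ! (t - 2)) (cell_of Pi row col p) = 1"
  from t consider "t = 2" | "t = 3" by blast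
  then show "?quadrants L"
  proof cases
    case 1
    with on_L have "\<forall>p\<in>L. case_prod F (cell_of Pi row col p) = 1" by simp
    with 1 L show ?thesis
      by (intro relational_line_quadrants[OF N row col _ _ _ _ _ G_const]) auto
  next
    case 2
    with on_L have "\<forall>p\<in>L. case_prod G (cell_of Pi row col p) = 1" by simp
    with 2 L show ?thesis
      by (intro template_4444_pair.relational_line_quadrants[OF swap N row col _ _ _ _ _ F_const]) auto
  qed
qed

theorem mainTheorem4:
  fixes P :: "'p set" and Pi :: "nat \<Rightarrow> 'p set set"
    and F0 F1 :: "nat \<Rightarrow> nat \<Rightarrow> nat" and row col :: "'p set \<Rightarrow> nat"
  assumes T: "template 10 [4,4,4,4] [F0, F1]"
    and N: "is_net 4 10 P Pi"
    and R: "refinement_via 10 [4,4,4,4] [F0, F1] P Pi row col"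
  shows
    \<comment> \<open>(i)\<close>
    "card {(i, j). i < 4 \<and> j < 4 \<and> F0 i j = 1 \<and> F1 i j = 1} = 4 \<and>
     (\<forall>i j i' j'. i < 4 \<and> j < 4 \<and> F0 i j = 1 \<and> F1 i j = 1 \<and>
        i' < 4 \<and> j' < 4 \<and> F0 i' j' = 1 \<and> F1 i' j' = 1 \<and> (i, j) \<noteq> (i', j')
        \<longrightarrow> i \<noteq> i' \<and> j \<noteq> j')
     \<and>
     \<comment> \<open>(ii)\<close>
     (\<forall>i<4. card {j. 4 \<le> j \<and> j < 10 \<and> F0 i j = 1 \<and> F1 i j = 0} = 3 \<and>
            card {j. 4 \<le> j \<and> j < 10 \<and> F0 i j = 0 \<and> F1 i j = 1} = 3) \<and>
     (\<forall>j<4. card {i. 4 \<le> i \<and> i < 10 \<and> F0 i j = 1 \<and> F1 i j = 0} = 3 \<and>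
            card {i. 4 \<le> i \<and> i < 10 \<and> F0 i j = 0 \<and> F1 i j = 1} = 3)
     \<and>
     \<comment> \<open>(iii)\<close>
     (\<forall>t\<in>{2, 3}. \<forall>L\<in>Pi t. (\<forall>p\<in>L. case_prod ([F0, F1] ! (t - 2)) (cell_of Pi row col p) = 1) \<longrightarrow>
        card {p\<in>L. fst (cell_of Pi row col p) < 4 \<and> snd (cell_of Pi row col p) < 4} = 1 \<and>
        card {p\<in>L. fst (cell_of Pi row col p) < 4 \<and> 4 \<le> snd (cell_of Pi row col p)} = 3 \<and>
        card {p\<in>L. 4 \<le> fst (cell_of Pi row col p) \<and> snd (cell_of Pi row col p) < 4} = 3 \<and>
        card {p\<in>L. 4 \<le> fst (cell_of Pi row col p) \<and> 4 \<le> snd (cell_of Pi row col p)} = 3)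
     \<and>
     \<comment> \<open>(iv)\<close>
     (\<forall>j. 4 \<le> j \<and> j < 10 \<longrightarrow>
        card {i. i < 4 \<and> F0 i j = 0 \<and> F1 i j = 1} = 2 \<and>
        card {i. i < 4 \<and> F0 i j = 1 \<and> F1 i j = 0} = 2) \<and>
     (\<forall>i. 4 \<le> i \<and> i < 10 \<longrightarrow>
        card {j. j < 4 \<and> F0 i j = 0 \<and> F1 i j = 1} = 2 \<and>
        card {j. j < 4 \<and> F0 i j = 1 \<and> F1 i j = 0} = 2) \<and>
     (\<forall>i. 4 \<le> i \<and> i < 10 \<longrightarrow>
        card {j. 4 \<le> j \<and> j < 10 \<and> F0 i j = 1 \<and> F1 i j = 1} = 2 \<and>
        card {j. 4 \<le> j \<and> j < 10 \<and> F0 i j = 0 \<and> F1 i j = 0} = 4) \<and>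
     (\<forall>j. 4 \<le> j \<and> j < 10 \<longrightarrow>
        card {i. 4 \<le> i \<and> i < 10 \<and> F0 i j = 1 \<and> F1 i j = 1} = 2 \<and>
        card {i. 4 \<le> i \<and> i < 10 \<and> F0 i j = 0 \<and> F1 i j = 0} = 4)"
proof -
  interpret template_4444_pair F0 F1
    using template_4444_squares[OF T] template_4444_agree_iff[OF T] by unfold_locales
  show ?thesis
    using Q1_weight4_cells Q2_Q3_relational_counts refinement_relational_line_quadrants[OF N R]
      Q2_Q3_Q4_nonrelational_counts
    by (elim conjE) (intro conjI; assumption)
qed

end
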